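(* Let $R=GR(4,m)$ with $m$ odd, and let $\mathcal{T}$ be its Teichmüller set. Then (1) the multiset $\mathcal{T}+\mathcal{T}+\mathcal{T}=\{X+Y+Z:X,Y,Z\in\mathcal{T}\}$ contains each element of $-\mathcal{T}$ with multiplicity one, and each element of $R$ outside $-\mathcal{T}$ with multiplicity $2^m+1$; (2) the multiset $\mathcal{T}+\mathcal{T}-\mathcal{T}=\{X+Y-Z:X,Y,Z\in\mathcal{T}\}$ contains each element of $\mathcal{T}$ with multiplicity $2^{m+1}-1$, and each element of $R$ outside $\mathcal{T}$ with multiplicity $2^m-1$.
   Context: $R=GR(4,m)=\mathbb{Z}_4[x]/(f(x))$ with $f$ monic of degree $m$ irreducible mod 2 (the Galois ring of order $4^m$). $\mathcal{T}=\{0,1,\beta,\dots,\beta^{2^m-2}\}$ where $\beta\in R^*$ has multiplicative order $2^m-1$ (Teichmüller set), and $-\mathcal{T}=\{-X:X\in\mathcal{T}\}$. Multisets count ordered tuples. *)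

theory Defs
  imports "HOL-Library.Numeral_Type" "HOL-Library.Multiset"
          "HOL-Computational_Algebra.Polynomial" "HOL-Computational_Algebra.Factorial_Ring"
begin

text \<open>Z_4 is the numeral type 4 (arithmetic mod 4), Z_2 the numeral type 2.
  GR(4,m) = Z_4[x]/(f) is modelled by its canonical representatives: polynomials
  over Z_4 of degree < m = degree f. Addition of representatives is ordinary
  polynomial addition; two polynomials represent the same element of R iff f divides
  their difference.\<close>

definition red2 :: "4 poly \<Rightarrow> 2 poly" where
  "red2 f = map_poly (\<lambda>c. of_int (Rep_bit0 c)) f"

definition GR_modulus :: "4 poly \<Rightarrow> nat \<Rightarrow> bool" where
  "GR_modulus f m \<longleftrightarrow> lead_coeff f = 1 \<and> degree f = m \<and> irreducible (red2 f)"

definition GR_carrier :: "4 poly \<Rightarrow> 4 poly set" where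
  "GR_carrier f = {p. degree p < degree f}"

definition GR_mult_order :: "4 poly \<Rightarrow> 4 poly \<Rightarrow> nat \<Rightarrow> bool" where
  "GR_mult_order f \<beta> n \<longleftrightarrow> 0 < n \<and> f dvd (\<beta> ^ n - 1) \<and>
      (\<forall>k. 0 < k \<and> k < n \<longrightarrow> \<not> f dvd (\<beta> ^ k - 1))"

definition teich :: "4 poly \<Rightarrow> 4 poly \<Rightarrow> 4 poly set" where
  "teich f \<beta> = {t \<in> GR_carrier f. t = 0 \<or> (\<exists>i < 2 ^ degree f - 1. f dvd (t - \<beta> ^ i))}"

end

theory Submission
  imports Defs
begin

text \<open>Reduction modulo \<open>2\<close> maps the Teichmueller set \<open>T\<close> bijectively onto the residue field
  \<open>F = R/2R\<close>, squaring permutes \<open>T\<close>, and every \<open>r \<in> R\<close> is uniquely \<open>U + 2V\<close> with \<open>U, V \<in> T\<close>.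
  Since \<open>4 = 0\<close>, \<open>x\<^sup>2 + y\<^sup>2 \<plusminus> z\<^sup>2 = (x + y + z)\<^sup>2 + 2 (xy + yz + zx [+ z\<^sup>2])\<close>, so after the
  substitution \<open>X = x\<^sup>2\<close> etc. the equation \<open>X + Y \<plusminus> Z = U + 2V\<close> becomes the system
  \<open>x + y + z = u\<close>, \<open>xy + yz + zx [+ z\<^sup>2] = V\<close> over \<open>F\<close>, where \<open>u\<^sup>2 = U\<close>. Eliminating \<open>z\<close> via
  \<open>a = x + u\<close>, \<open>b = y + u\<close> leaves \<open>a\<^sup>2 + ab + b\<^sup>2 = V + u\<^sup>2\<close>, resp. \<open>ab = V\<close>. For odd \<open>m\<close> the
  form \<open>a\<^sup>2 + ab + b\<^sup>2\<close> is anisotropic over \<open>F\<close> (as \<open>3\<close> does not divide \<open>2\<^sup>m - 1\<close>), so by scaling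
  it takes every nonzero value \<open>2\<^sup>m + 1\<close> times; \<open>ab = c\<close> has \<open>2\<^sup>m - 1\<close> solutions for \<open>c \<noteq> 0\<close>
  and \<open>2 \<cdot> 2\<^sup>m - 1\<close> for \<open>c = 0\<close>. Finally \<open>V + u\<^sup>2 = 0\<close> iff \<open>V = U\<close> iff \<open>r \<in> -T\<close>, and \<open>V = 0\<close> iff
  \<open>r \<in> T\<close>.\<close>

lemma coprime_two_pow_minus_one_3:
  assumes "odd m"
  shows "coprime (2 ^ m - 1) (3 :: nat)"
proof -
  obtain k where m: "m = 2 * k + 1"
    using assms by (rule oddE)
  have "(2 :: nat) ^ m = 2 * 4 ^ k"
    unfolding m by (simp add: power_mult)
  moreover have "(4 :: nat) ^ k mod 3 = 1"
    using power_mod[of "4 :: nat" 3 k] by simp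
  ultimately have "(2 :: nat) ^ m mod 3 = 2"
    using mod_mult_right_eq[of 2 "4 ^ k" "3 :: nat"] by simp
  then have "(2 ^ m - 1) mod 3 = (1 :: nat)"
    by (cases "2 ^ m :: nat") (auto simp: mod_Suc split: if_splits)
  then show ?thesis
    using coprime_mod_left_iff[of "3 :: nat" "2 ^ m - 1"] by simp
qed

lemma card_bij_betw_subsets:
  assumes "bij_betw \<phi> A B" "S \<subseteq> A" "S' \<subseteq> B" "\<And>x. x \<in> A \<Longrightarrow> x \<in> S \<longleftrightarrow> \<phi> x \<in> S'"
  shows "card S = card S'"
proof -
  have image: "\<phi> ` S = S'"
  proof (intro equalityI subsetI)
    fix y assume "y \<in> \<phi> ` S"
    then obtain x where "x \<in> S" "y = \<phi> x"
      by blast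
    then show "y \<in> S'"
      using assms(2,4) by blast
  next
    fix y assume "y \<in> S'"
    then obtain x where "x \<in> A" "y = \<phi> x"
      using assms(1,3) unfolding bij_betw_def by blast
    then show "y \<in> \<phi> ` S"
      using assms(4) \<open>y \<in> S'\<close> by blast
  qed
  have "inj_on \<phi> S"
    using inj_on_subset[of \<phi> A S] assms(1,2) by (simp add: bij_betw_def)
  then show ?thesis
    using card_image image by fastforce
qed

lemma card_eq_sum_card_fibres:
  assumes "finite A" "finite C" "h ` A \<subseteq> C"
  shows "card A = (\<Sum>c \<in> C. card {x \<in> A. h x = c})"
proof -
  have "A = (\<Union>c \<in> C. {x \<in> A. h x = c})"
    using assms(3) by auto
  then show ?thesis
    using card_UN_disjoint[of C "\<lambda>c. {x \<in> A. h x = c}"] assms(1,2) by auto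
qed

lemma count_image_mset_mset_set:
  assumes "finite A"
  shows "count (image_mset g (mset_set A)) r = card {x \<in> A. g x = r}"
proof -
  have "count (image_mset g (mset_set A)) r = (\<Sum>x \<in> g -` {r} \<inter> A. 1)"
    using assms by (simp add: count_image_mset)
  also have "g -` {r} \<inter> A = {x \<in> A. g x = r}"
    by auto
  finally show ?thesis
    by simp
qed

lemma square_sum_identity:
  fixes x y z d :: "'a :: comm_ring_1"
  shows "(x + y + z)\<^sup>2 + 2 * (x * y + y * z + z * x + d * z\<^sup>2)
    = x\<^sup>2 + y\<^sup>2 + (1 - 2 * d) * z\<^sup>2 + 4 * (x * y + y * z + z * x + d * z\<^sup>2)"
  by (simp add: power2_eq_square algebra_simps)

lemma Z4_cases: "(c::4) = 0 \<or> c = 1 \<or> c = 2 \<or> c = 3"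
proof (induct c)
  case (of_int z)
  then have "z = 0 \<or> z = 1 \<or> z = 2 \<or> z = 3" by auto
  then show ?case by (elim disjE) simp_all
qed

lemma four_eq_0_poly [simp]: "(4 :: 4 poly) = 0"
proof -
  have "(4 :: 4 poly) = [:4:]" by (rule numeral_poly)
  also have "\<dots> = 0" by simp
  finally show ?thesis .
qed

lemma three_eq_minus_one_poly: "(3 :: 4 poly) = - 1"
proof -
  have "(3 :: 4 poly) = 4 - 1"
    by simp
  then show ?thesis
    by simp
qed

definition low_digit :: "4 \<Rightarrow> 4" where
  "low_digit c = (if c = 1 \<or> c = 3 then 1 else 0)"

definition high_digit :: "4 \<Rightarrow> 4" where
  "high_digit c = (if c = 2 \<or> c = 3 then 1 else 0)"

lemma low_digit_cases: "low_digit c = 0 \<or> low_digit c = 1"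
  by (simp add: low_digit_def)

lemma low_digit_0 [simp]: "low_digit 0 = 0" and high_digit_0 [simp]: "high_digit 0 = 0"
  by (simp_all add: low_digit_def high_digit_def)

lemma low_high_digit: "low_digit c + 2 * high_digit c = c"
  using Z4_cases[of c] by (elim disjE) (simp_all add: low_digit_def high_digit_def)

lemma low_digit_eq_0_if_double_eq_0: "2 * c = 0 \<Longrightarrow> low_digit c = 0"
  using Z4_cases[of c] by (auto simp: low_digit_def)

lemma coeff_double: "coeff (2 * p) i = 2 * coeff p i"
  by (simp only: mult_2 coeff_add)

lemma poly_low_high_digits: "map_poly low_digit p + 2 * map_poly high_digit p = (p :: 4 poly)"
  by (rule poly_eqI) (simp only: coeff_add coeff_double coeff_map_poly low_digit_0 high_digit_0 low_high_digit)

lemma poly_double_eq_0_imp: "2 * p = (0 :: 4 poly) \<Longrightarrow> p = 2 * map_poly high_digit p"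
proof -
  assume "2 * p = 0"
  have "map_poly low_digit p = 0"
  proof (rule poly_eqI)
    fix i
    have "2 * coeff p i = 0"
      using \<open>2 * p = 0\<close> by (metis coeff_0 coeff_double)
    then show "coeff (map_poly low_digit p) i = coeff 0 i"
      by (simp add: coeff_map_poly low_digit_eq_0_if_double_eq_0)
  qed
  then show ?thesis
    using poly_low_high_digits[of p] by simp
qed

lemma card_binary_polys:
  "finite {p :: 4 poly. degree p < m \<and> (\<forall>i. coeff p i \<in> {0, 1})}"
  "card {p :: 4 poly. degree p < m \<and> (\<forall>i. coeff p i \<in> {0, 1})} \<le> 2 ^ m"
proof -
  let ?B = "{p :: 4 poly. degree p < m \<and> (\<forall>i. coeff p i \<in> {0, 1})}"
  define support where "support p = {i. coeff p i = 1}" for p :: "4 poly"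
  have "inj_on support ?B"
  proof (rule inj_onI)
    fix p p' assume p: "p \<in> ?B" "p' \<in> ?B" and eq: "support p = support p'"
    show "p = p'"
    proof (rule poly_eqI)
      fix i
      have "coeff p i = 1 \<longleftrightarrow> coeff p' i = 1"
        using eq unfolding support_def by blast
      moreover have "coeff p i \<in> {0, 1}" "coeff p' i \<in> {0, 1}"
        using p by auto
      ultimately show "coeff p i = coeff p' i"
        by auto
    qed
  qed
  moreover have "support p \<subseteq> {..<m}" if "p \<in> ?B" for p
  proof
    fix i assume "i \<in> support p"
    then have "i \<le> degree p"
      by (intro le_degree) (simp add: support_def)
    then show "i \<in> {..<m}"
      using that by simp
  qed
  ultimately show "finite ?B" "card ?B \<le> 2 ^ m"
    using card_inj_on_le[of support ?B "Pow {..<m}"] inj_on_finite[of support ?B "Pow {..<m}"]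
    by (auto simp: card_Pow)
qed

lemma monic_dvd_degree_less_imp_0:
  fixes f g :: "'a::comm_ring_1 poly"
  assumes "lead_coeff f = 1" "f dvd g" "degree g < degree f"
  shows "g = 0"
proof (rule ccontr)
  assume "g \<noteq> 0"
  obtain h where g: "g = f * h" using assms(2) by (elim dvdE)
  with \<open>g \<noteq> 0\<close> have "coeff g (degree f + degree h) \<noteq> 0"
    using coeff_mult_degree_sum[of f h] assms(1) by auto
  then show False
    using le_degree assms(3) by fastforce
qed

lemma monic_remainder_exists:
  fixes f a :: "'a::comm_ring_1 poly"
  assumes monic: "lead_coeff f = 1" and "0 < degree f"
  shows "\<exists>r. degree r < degree f \<and> f dvd a - r"
proof (induction "degree a" arbitrary: a rule: less_induct)
  case less
  show ?case
  proof (cases "degree a < degree f")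
    case True
    then show ?thesis by (intro exI[of _ a]) simp
  next
    case False
    define a' where "a' = a - monom (lead_coeff a) (degree a - degree f) * f"
    have "degree a' < degree a"
    proof -
      have "degree (monom (lead_coeff a) (degree a - degree f) * f) \<le> degree a"
        using degree_mult_le[of "monom (lead_coeff a) (degree a - degree f)" f]
          degree_monom_le[of "lead_coeff a" "degree a - degree f"] False by simp
      moreover have "coeff (monom (lead_coeff a) (degree a - degree f) * f) (degree a) = lead_coeff a"
        using False monic by (simp add: coeff_monom_mult)
      ultimately have "coeff a' i = 0" if "degree a \<le> i" for i
        using that coeff_eq_0[of a i] coeff_eq_0[of "monom (lead_coeff a) (degree a - degree f) * f" i]
        unfolding a'_def by (cases "i = degree a") auto
      then have "degree a' \<le> degree a - 1"
        by (intro degree_le) auto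
      then show ?thesis
        using False assms(2) by linarith
    qed
    then obtain r where "degree r < degree f" "f dvd a' - r"
      using less by blast
    moreover have "a - r = (a' - r) + f * monom (lead_coeff a) (degree a - degree f)"
      by (simp add: a'_def algebra_simps)
    ultimately show ?thesis
      by (metis dvd_add dvd_triv_left)
  qed
qed

section \<open>Congruences modulo \<open>f\<close> and modulo \<open>(2, f)\<close>\<close>

locale teichmueller =
  fixes f \<beta> :: "4 poly" and m :: nat
  assumes monic: "lead_coeff f = 1"
    and degree_f: "degree f = m"
    and order_\<beta>: "GR_mult_order f \<beta> (2 ^ m - 1)"
begin

abbreviation T where "T \<equiv> teich f \<beta>"

text \<open>Equality in \<open>R = \<int>\<^sub>4[x]/(f)\<close> and in its residue field \<open>R/2R = \<int>\<^sub>4[x]/(2, f)\<close>.\<close>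

definition eq_R :: "4 poly \<Rightarrow> 4 poly \<Rightarrow> bool" (infix "=\<^sub>R" 50) where
  "a =\<^sub>R b \<longleftrightarrow> f dvd a - b"

definition eq_F :: "4 poly \<Rightarrow> 4 poly \<Rightarrow> bool" (infix "=\<^sub>F" 50) where
  "a =\<^sub>F b \<longleftrightarrow> (\<exists>c k. a - b = 2 * c + f * k)"

lemma order_pos: "0 < (2 ^ m - 1 :: nat)"
  using order_\<beta> by (simp add: GR_mult_order_def)

lemma m_pos: "0 < m"
  using order_pos by (cases m) auto

lemma eq_R_refl [simp]: "a =\<^sub>R a"
  by (simp add: eq_R_def)

lemma eq_R_sym: "a =\<^sub>R b \<Longrightarrow> b =\<^sub>R a"
  unfolding eq_R_def using dvd_minus_iff[of f "a - b"] by simp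

lemma eq_R_trans [trans]: "a =\<^sub>R b \<Longrightarrow> b =\<^sub>R c \<Longrightarrow> a =\<^sub>R c"
  unfolding eq_R_def using dvd_add[of f "a - b" "b - c"] by simp

lemma eq_R_add: "a =\<^sub>R b \<Longrightarrow> c =\<^sub>R d \<Longrightarrow> a + c =\<^sub>R b + d"
  unfolding eq_R_def using dvd_add[of f "a - b" "c - d"] by (simp add: add_diff_add)

lemma eq_R_mult: "a =\<^sub>R b \<Longrightarrow> c =\<^sub>R d \<Longrightarrow> a * c =\<^sub>R b * d"
proof -
  assume "a =\<^sub>R b" "c =\<^sub>R d"
  then have "f dvd (a - b) * c + b * (c - d)"
    unfolding eq_R_def by simp
  moreover have "(a - b) * c + b * (c - d) = a * c - b * d"
    by (simp add: algebra_simps)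
  ultimately show ?thesis
    unfolding eq_R_def by simp
qed

lemma eq_R_pow: "a =\<^sub>R b \<Longrightarrow> a ^ k =\<^sub>R b ^ k"
  by (induction k) (simp_all add: eq_R_mult)

lemma eq_R_iff_left: "a =\<^sub>R a' \<Longrightarrow> a =\<^sub>R b \<longleftrightarrow> a' =\<^sub>R b"
  using eq_R_trans[of a' a b] eq_R_trans[of a a' b] eq_R_sym[of a a'] by blast

lemma eq_R_iff_right: "b =\<^sub>R c \<Longrightarrow> a =\<^sub>R b \<longleftrightarrow> a =\<^sub>R c"
  using eq_R_trans[of a b c] eq_R_trans[of a c b] eq_R_sym[of b c] by blast

lemma eq_R_canonical: "degree a < m \<Longrightarrow> degree b < m \<Longrightarrow> a =\<^sub>R b \<Longrightarrow> a = b"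
  using monic_dvd_degree_less_imp_0[OF monic, of "a - b"] degree_diff_le_max[of a b]
  unfolding eq_R_def degree_f by simp

lemma eq_F_intro: "a - b = 2 * c + f * k \<Longrightarrow> a =\<^sub>F b"
  unfolding eq_F_def by blast

lemma eq_F_if_diff_double: "a - b = 2 * c \<Longrightarrow> a =\<^sub>F b"
  by (rule eq_F_intro[where k = 0]) simp

lemma eq_F_refl [simp]: "a =\<^sub>F a"
  by (rule eq_F_if_diff_double[where c = 0]) simp

lemma eq_F_sym: "a =\<^sub>F b \<Longrightarrow> b =\<^sub>F a"
proof -
  assume "a =\<^sub>F b"
  then obtain c k where "a - b = 2 * c + f * k"
    unfolding eq_F_def by blast
  then have "b - a = 2 * (- c) + f * (- k)"
    by (simp add: algebra_simps)
  then show ?thesis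
    by (rule eq_F_intro)
qed

lemma eq_F_trans [trans]: "a =\<^sub>F b \<Longrightarrow> b =\<^sub>F c \<Longrightarrow> a =\<^sub>F c"
proof -
  assume "a =\<^sub>F b" "b =\<^sub>F c"
  then obtain c1 k1 c2 k2 where "a - b = 2 * c1 + f * k1" "b - c = 2 * c2 + f * k2"
    unfolding eq_F_def by blast
  then have "a - c = 2 * (c1 + c2) + f * (k1 + k2)"
    by (simp add: algebra_simps)
  then show ?thesis
    by (rule eq_F_intro)
qed

lemma eq_F_iff_right: "b =\<^sub>F c \<Longrightarrow> a =\<^sub>F b \<longleftrightarrow> a =\<^sub>F c"
  using eq_F_trans[of a b c] eq_F_trans[of a c b] eq_F_sym[of b c] by blast

lemma eq_F_iff_left: "a =\<^sub>F a' \<Longrightarrow> a =\<^sub>F b \<longleftrightarrow> a' =\<^sub>F b"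
  using eq_F_trans[of a' a b] eq_F_trans[of a a' b] eq_F_sym[of a a'] by blast

lemma eq_F_iff_of_diff: "a - b - (c - d) = 2 * w \<Longrightarrow> a =\<^sub>F b \<longleftrightarrow> c =\<^sub>F d"
proof -
  assume w: "a - b - (c - d) = 2 * w"
  have "c - d = 2 * (c' - w) + f * k" if "a - b = 2 * c' + f * k" for c' k
    using w that by (simp add: algebra_simps)
  moreover have "a - b = 2 * (c' + w) + f * k" if "c - d = 2 * c' + f * k" for c' k
    using w that by (simp add: algebra_simps)
  ultimately show ?thesis
    unfolding eq_F_def by blast
qed

lemma eq_F_add_cancel_right: "a + c =\<^sub>F b + c \<longleftrightarrow> a =\<^sub>F b"
  by (rule eq_F_iff_of_diff[where w = 0]) simp

lemma eq_F_add: "a =\<^sub>F b \<Longrightarrow> c =\<^sub>F d \<Longrightarrow> a + c =\<^sub>F b + d"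
proof -
  assume "a =\<^sub>F b" "c =\<^sub>F d"
  then obtain c1 k1 c2 k2 where "a - b = 2 * c1 + f * k1" "c - d = 2 * c2 + f * k2"
    unfolding eq_F_def by blast
  then have "a + c - (b + d) = 2 * (c1 + c2) + f * (k1 + k2)"
    by (simp add: algebra_simps)
  then show ?thesis
    by (rule eq_F_intro)
qed

lemma eq_F_mult: "a =\<^sub>F b \<Longrightarrow> c =\<^sub>F d \<Longrightarrow> a * c =\<^sub>F b * d"
proof -
  assume "a =\<^sub>F b" "c =\<^sub>F d"
  then obtain c1 k1 c2 k2 where ab: "a - b = 2 * c1 + f * k1" and cd: "c - d = 2 * c2 + f * k2"
    unfolding eq_F_def by blast
  have "a * c - b * d = (a - b) * c + b * (c - d)"
    by (simp add: algebra_simps)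
  also have "\<dots> = 2 * (c1 * c + b * c2) + f * (k1 * c + b * k2)"
    unfolding ab cd by (simp add: algebra_simps)
  finally show ?thesis
    by (rule eq_F_intro)
qed

lemma eq_F_pow: "a =\<^sub>F b \<Longrightarrow> a ^ k =\<^sub>F b ^ k"
  by (induction k) (simp_all add: eq_F_mult)

lemma eq_F_if_eq_R: "a =\<^sub>R b \<Longrightarrow> a =\<^sub>F b"
  unfolding eq_R_def by (auto intro: eq_F_intro[where c = 0] elim!: dvdE)

lemma eq_R_eq_F_trans [trans]: "a =\<^sub>R b \<Longrightarrow> b =\<^sub>F c \<Longrightarrow> a =\<^sub>F c"
  and eq_F_eq_R_trans [trans]: "a =\<^sub>F b \<Longrightarrow> b =\<^sub>R c \<Longrightarrow> a =\<^sub>F c"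
  using eq_F_trans eq_F_if_eq_R by blast+

text \<open>Since \<open>4 = 0\<close>, squaring and doubling only depend on the residue modulo \<open>2\<close>.\<close>

lemma eq_F_imp_square_eq_R: "a =\<^sub>F b \<Longrightarrow> a\<^sup>2 =\<^sub>R b\<^sup>2"
proof -
  assume "a =\<^sub>F b"
  then obtain c k where a: "a = b + 2 * c + f * k"
    unfolding eq_F_def by (metis add.assoc add.commute diff_add_cancel)
  have "a\<^sup>2 - b\<^sup>2 = f * (k * (2 * b + 2 * c + f * k) + 2 * c * k) + 2 * (2 * (c * b + c * c))"
    unfolding a by (simp add: power2_eq_square algebra_simps)
  then show ?thesis
    unfolding eq_R_def by simp
qed

lemma eq_F_imp_double_eq_R: "a =\<^sub>F b \<Longrightarrow> 2 * a =\<^sub>R 2 * b"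
proof -
  assume "a =\<^sub>F b"
  then obtain c k where "a - b = 2 * c + f * k"
    unfolding eq_F_def by blast
  then have "2 * a - 2 * b = 2 * (2 * c) + f * (2 * k)"
    by (simp add: algebra_simps flip: \<open>a - b = _\<close>)
  then show ?thesis
    unfolding eq_R_def by simp
qed

lemma one_not_eq_F_0: "\<not> 1 =\<^sub>F 0"
proof
  assume "1 =\<^sub>F 0"
  then have "1 =\<^sub>R 0"
    using eq_F_imp_square_eq_R by fastforce
  then show False
    using eq_R_canonical[of 1 0] m_pos by simp
qed

lemma beta_pow_order: "\<beta> ^ (2 ^ m - 1) =\<^sub>R 1"
  and beta_pow_minimal: "0 < k \<Longrightarrow> k < 2 ^ m - 1 \<Longrightarrow> \<not> \<beta> ^ k =\<^sub>R 1"
  using order_\<beta> unfolding GR_mult_order_def eq_R_def by auto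

lemma beta_pow_multiple: "\<beta> ^ ((2 ^ m - 1) * j) =\<^sub>R 1"
  using eq_R_pow[OF beta_pow_order, of j] by (simp add: power_mult)

lemma beta_pow_mod: "\<beta> ^ k =\<^sub>R \<beta> ^ (k mod (2 ^ m - 1))"
proof -
  have "\<beta> ^ k = \<beta> ^ ((2 ^ m - 1) * (k div (2 ^ m - 1))) * \<beta> ^ (k mod (2 ^ m - 1))"
    by (simp flip: power_add)
  also have "\<dots> =\<^sub>R 1 * \<beta> ^ (k mod (2 ^ m - 1))"
    by (rule eq_R_mult[OF beta_pow_multiple eq_R_refl])
  finally show ?thesis
    by simp
qed

lemma beta_pow_eq_R_1_iff: "\<beta> ^ k =\<^sub>R 1 \<longleftrightarrow> (2 ^ m - 1) dvd k"
proof
  assume "\<beta> ^ k =\<^sub>R 1"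
  then have "\<beta> ^ (k mod (2 ^ m - 1)) =\<^sub>R 1"
    using eq_R_trans[OF eq_R_sym[OF beta_pow_mod]] by blast
  moreover have "k mod (2 ^ m - 1) < 2 ^ m - 1"
    using order_pos by simp
  ultimately show "(2 ^ m - 1) dvd k"
    using beta_pow_minimal by (auto simp: dvd_eq_mod_eq_0)
next
  assume "(2 ^ m - 1) dvd k"
  then obtain j where "k = (2 ^ m - 1) * j" ..
  then show "\<beta> ^ k =\<^sub>R 1"
    using beta_pow_multiple by simp
qed

text \<open>Squaring carries \<open>=\<^sub>F\<close> to \<open>=\<^sub>R\<close>, and \<open>2\<close> is invertible modulo the odd order \<open>2\<^sup>m - 1\<close>.\<close>

lemma beta_pow_eq_F_1_imp: "\<beta> ^ k =\<^sub>F 1 \<Longrightarrow> (2 ^ m - 1) dvd k"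
proof -
  assume "\<beta> ^ k =\<^sub>F 1"
  then have "\<beta> ^ (2 * k) =\<^sub>R 1"
    using eq_F_imp_square_eq_R by (fastforce simp: power_mult mult.commute)
  then have "(2 ^ m - 1) dvd 2 * k"
    by (simp add: beta_pow_eq_R_1_iff)
  moreover have "coprime (2 ^ m - 1) (2 :: nat)"
    using m_pos by simp
  ultimately show ?thesis
    using coprime_dvd_mult_right_iff by blast
qed

lemma beta_pow_eq_F_imp_mod_eq:
  assumes "\<beta> ^ i =\<^sub>F \<beta> ^ j"
  shows "i mod (2 ^ m - 1) = j mod (2 ^ m - 1)"
proof -
  define n :: nat where "n = 2 ^ m - 1"
  have n_split: "i + (n - 1) * i = n * i"
    using order_pos unfolding n_def[symmetric] by (cases n) auto
  have "\<beta> ^ (j + (n - 1) * i) = \<beta> ^ j * \<beta> ^ ((n - 1) * i)"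
    by (simp add: power_add)
  also have "\<dots> =\<^sub>F \<beta> ^ i * \<beta> ^ ((n - 1) * i)"
    by (rule eq_F_mult[OF eq_F_sym[OF assms] eq_F_refl])
  also have "\<dots> = \<beta> ^ (n * i)"
    by (simp only: n_split flip: power_add)
  also have "\<dots> =\<^sub>R 1"
    unfolding n_def by (rule beta_pow_multiple)
  finally have "n dvd j + (n - 1) * i"
    unfolding n_def by (rule beta_pow_eq_F_1_imp)
  then have "(j + (n - 1) * i + i) mod n = i mod n"
    using mod_add_left_eq[of "j + (n - 1) * i" n i] by simp
  then have "(j + n * i) mod n = i mod n"
    by (metis add.assoc add.commute n_split)
  then show ?thesis
    unfolding n_def[symmetric] by simp
qed

lemma beta_pow_eq_R_iff: "\<beta> ^ i =\<^sub>R \<beta> ^ j \<longleftrightarrow> i mod (2 ^ m - 1) = j mod (2 ^ m - 1)"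
proof
  assume "i mod (2 ^ m - 1) = j mod (2 ^ m - 1)"
  have "\<beta> ^ i =\<^sub>R \<beta> ^ (i mod (2 ^ m - 1))"
    by (rule beta_pow_mod)
  also have "\<dots> = \<beta> ^ (j mod (2 ^ m - 1))"
    by (simp only: \<open>i mod _ = _\<close>)
  also have "\<dots> =\<^sub>R \<beta> ^ j"
    by (rule eq_R_sym[OF beta_pow_mod])
  finally show "\<beta> ^ i =\<^sub>R \<beta> ^ j" .
qed (rule beta_pow_eq_F_imp_mod_eq[OF eq_F_if_eq_R])

lemma beta_pow_eq_F_iff: "\<beta> ^ i =\<^sub>F \<beta> ^ j \<longleftrightarrow> \<beta> ^ i =\<^sub>R \<beta> ^ j"
  using beta_pow_eq_F_imp_mod_eq beta_pow_eq_R_iff eq_F_if_eq_R by blast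

lemma beta_pow_not_eq_F_0: "\<not> \<beta> ^ k =\<^sub>F 0"
proof
  assume "\<beta> ^ k =\<^sub>F 0"
  have "1 =\<^sub>R \<beta> ^ ((2 ^ m - 1) * k)"
    by (rule eq_R_sym[OF beta_pow_multiple])
  also have "\<dots> = (\<beta> ^ k) ^ (2 ^ m - 1)"
    by (simp add: power_mult mult.commute)
  also have "\<dots> =\<^sub>F 0 ^ (2 ^ m - 1)"
    by (rule eq_F_pow[OF \<open>\<beta> ^ k =\<^sub>F 0\<close>])
  also have "\<dots> = 0"
    using order_pos by (simp add: power_0_left)
  finally show False
    using one_not_eq_F_0 by blast
qed

section \<open>The Teichmueller set\<close>

lemma mem_teich_iff: "t \<in> T \<longleftrightarrow> degree t < m \<and> (t = 0 \<or> (\<exists>i. t =\<^sub>R \<beta> ^ i))"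
proof -
  have "(\<exists>i < 2 ^ m - 1. t =\<^sub>R \<beta> ^ i) \<longleftrightarrow> (\<exists>i. t =\<^sub>R \<beta> ^ i)"
  proof
    assume "\<exists>i. t =\<^sub>R \<beta> ^ i"
    then obtain i where "t =\<^sub>R \<beta> ^ i" ..
    then have "t =\<^sub>R \<beta> ^ (i mod (2 ^ m - 1))"
      using beta_pow_mod eq_R_trans by blast
    then show "\<exists>i < 2 ^ m - 1. t =\<^sub>R \<beta> ^ i"
      using order_pos mod_less_divisor by blast
  qed blast
  then show ?thesis
    unfolding teich_def GR_carrier_def degree_f by (auto simp: eq_R_def)
qed

lemma teich_degree: "t \<in> T \<Longrightarrow> degree t < m"
  by (simp add: mem_teich_iff)

lemma zero_in_teich [simp]: "0 \<in> T"
  using m_pos by (simp add: mem_teich_iff)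

lemma one_in_teich [simp]: "1 \<in> T"
  using m_pos mem_teich_iff[of 1] by (metis degree_1 eq_R_refl power_0)

lemma teich_nonzero_imp: "t \<in> T \<Longrightarrow> t \<noteq> 0 \<Longrightarrow> \<exists>i. t =\<^sub>R \<beta> ^ i"
  by (simp add: mem_teich_iff)

lemma teich_eq_R_imp_eq: "t \<in> T \<Longrightarrow> s \<in> T \<Longrightarrow> t =\<^sub>R s \<Longrightarrow> t = s"
  using eq_R_canonical teich_degree by blast

lemma teich_eq_F_0_iff: "t \<in> T \<Longrightarrow> t =\<^sub>F 0 \<longleftrightarrow> t = 0"
  using teich_nonzero_imp beta_pow_not_eq_F_0 eq_R_sym eq_R_eq_F_trans by fastforce

lemma teich_eq_F_imp_eq:
  assumes "t \<in> T" "s \<in> T" "t =\<^sub>F s"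
  shows "t = s"
proof (cases "t = 0 \<or> s = 0")
  case True
  then show ?thesis
    using assms teich_eq_F_0_iff eq_F_sym by blast
next
  case False
  then obtain i j where i: "t =\<^sub>R \<beta> ^ i" and j: "s =\<^sub>R \<beta> ^ j"
    using assms teich_nonzero_imp by blast
  have "\<beta> ^ i =\<^sub>R t"
    by (rule eq_R_sym[OF i])
  also note \<open>t =\<^sub>F s\<close>
  also note j
  finally have "\<beta> ^ i =\<^sub>R \<beta> ^ j"
    by (simp add: beta_pow_eq_F_iff)
  then have "t =\<^sub>R s"
    using i j eq_R_sym eq_R_trans by blast
  then show ?thesis
    using assms teich_eq_R_imp_eq by blast
qed

definition reduce :: "4 poly \<Rightarrow> 4 poly" where
  "reduce a = (SOME r. degree r < m \<and> a =\<^sub>R r)"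

lemma degree_reduce: "degree (reduce a) < m" and eq_R_reduce: "a =\<^sub>R reduce a"
proof -
  have "\<exists>r. degree r < m \<and> a =\<^sub>R r"
    using monic_remainder_exists[OF monic, of a] m_pos unfolding degree_f eq_R_def by blast
  then show "degree (reduce a) < m" "a =\<^sub>R reduce a"
    unfolding reduce_def by (metis (mono_tags, lifting) someI_ex)+
qed

lemma reduce_beta_pow_in_teich: "reduce (\<beta> ^ i) \<in> T"
  unfolding mem_teich_iff using degree_reduce eq_R_sym[OF eq_R_reduce] by blast

lemma reduce_beta_pow_nonzero: "reduce (\<beta> ^ i) \<noteq> 0"
  using eq_R_reduce[of "\<beta> ^ i"] beta_pow_not_eq_F_0 eq_F_if_eq_R by force

lemma teich_eq_image: "T = insert 0 ((\<lambda>i. reduce (\<beta> ^ i)) ` {..<2 ^ m - 1})"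
proof (intro equalityI subsetI)
  fix t assume t: "t \<in> T"
  show "t \<in> insert 0 ((\<lambda>i. reduce (\<beta> ^ i)) ` {..<2 ^ m - 1})"
  proof (cases "t = 0")
    case False
    then obtain i where "t =\<^sub>R \<beta> ^ i"
      using t teich_nonzero_imp by blast
    then have "t =\<^sub>R \<beta> ^ (i mod (2 ^ m - 1))"
      using beta_pow_mod eq_R_trans by blast
    then have "t = reduce (\<beta> ^ (i mod (2 ^ m - 1)))"
      using t reduce_beta_pow_in_teich eq_R_reduce eq_R_trans teich_eq_R_imp_eq by blast
    then show ?thesis
      using order_pos by auto
  qed simp
qed (auto simp: reduce_beta_pow_in_teich)

lemma finite_teich: "finite T"
  by (simp add: teich_eq_image)

lemma card_teich: "card T = 2 ^ m"
proof -
  have "inj_on (\<lambda>i. reduce (\<beta> ^ i)) {..<2 ^ m - 1}"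
  proof (rule inj_onI)
    fix i j assume "i \<in> {..<2 ^ m - 1}" "j \<in> {..<2 ^ m - 1}" "reduce (\<beta> ^ i) = reduce (\<beta> ^ j)"
    moreover from this have "\<beta> ^ i =\<^sub>R \<beta> ^ j"
      using eq_R_reduce eq_R_sym eq_R_trans by metis
    ultimately show "i = j"
      by (simp add: beta_pow_eq_R_iff)
  qed
  moreover have "0 \<notin> (\<lambda>i. reduce (\<beta> ^ i)) ` {..<2 ^ m - 1}"
    using reduce_beta_pow_nonzero by auto
  ultimately have "card T = Suc (2 ^ m - 1)"
    unfolding teich_eq_image by (simp add: card_image)
  then show ?thesis
    using order_pos by simp
qed

text \<open>The \<open>2\<^sup>m\<close> elements of \<open>T\<close> have distinct residues modulo \<open>2\<close>, and each residue class contains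
  one of the at most \<open>2\<^sup>m\<close> polynomials of degree \<open>< m\<close> with coefficients in \<open>{0, 1}\<close>.\<close>

lemma ex_teich_eq_F: "\<exists>t \<in> T. a =\<^sub>F t"
proof -
  let ?B = "{p :: 4 poly. degree p < m \<and> (\<forall>i. coeff p i \<in> {0, 1})}"
  define binary where "binary a = map_poly low_digit (reduce a)" for a
  have binary_mem: "binary a \<in> ?B" for a
  proof -
    have "degree (binary a) \<le> degree (reduce a)"
      unfolding binary_def by (rule degree_le) (simp add: coeff_map_poly coeff_eq_0)
    then show ?thesis
      using degree_reduce[of a] low_digit_cases by (simp add: binary_def coeff_map_poly)
  qed
  have eq_F_binary: "a =\<^sub>F binary a" for a
  proof -
    have "reduce a - binary a = 2 * map_poly high_digit (reduce a)"
      using poly_low_high_digits[of "reduce a"] unfolding binary_def by (simp add: algebra_simps)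
    then show ?thesis
      using eq_R_reduce eq_R_eq_F_trans eq_F_if_diff_double by blast
  qed
  have "inj_on binary T"
  proof (rule inj_onI)
    fix t s assume "t \<in> T" "s \<in> T" "binary t = binary s"
    then have "t =\<^sub>F s"
      using eq_F_binary[of t] eq_F_sym[OF eq_F_binary[of s]] by (simp add: eq_F_trans)
    then show "t = s"
      using \<open>t \<in> T\<close> \<open>s \<in> T\<close> teich_eq_F_imp_eq by blast
  qed
  then have "card ?B \<le> card (binary ` T)"
    using card_binary_polys(2) card_teich by (simp add: card_image)
  then have "binary ` T = ?B"
    using card_binary_polys(1) binary_mem by (intro card_seteq) auto
  then obtain t where "t \<in> T" "binary a = binary t"
    using binary_mem[of a] by blast
  then have "a =\<^sub>F t"
    using eq_F_binary[of a] eq_F_sym[OF eq_F_binary[of t]] by (simp add: eq_F_trans)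
  then show ?thesis
    using \<open>t \<in> T\<close> by blast
qed

definition teich_lift :: "4 poly \<Rightarrow> 4 poly" where
  "teich_lift a = (THE t. t \<in> T \<and> a =\<^sub>F t)"

lemma ex1_teich_eq_F: "\<exists>!t. t \<in> T \<and> a =\<^sub>F t"
proof -
  obtain t where "t \<in> T" "a =\<^sub>F t"
    using ex_teich_eq_F by blast
  moreover have "s = t" if "s \<in> T" "a =\<^sub>F s" for s
    using teich_eq_F_imp_eq[OF that(1) \<open>t \<in> T\<close>] eq_F_trans[OF eq_F_sym[OF that(2)] \<open>a =\<^sub>F t\<close>] .
  ultimately show ?thesis
    by blast
qed

lemma teich_lift_in_teich [simp]: "teich_lift a \<in> T"
  and eq_F_teich_lift: "a =\<^sub>F teich_lift a"
  using theI'[OF ex1_teich_eq_F[of a]] unfolding teich_lift_def by blast+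

lemma teich_lift_eqI: "t \<in> T \<Longrightarrow> a =\<^sub>F t \<Longrightarrow> teich_lift a = t"
  using ex1_teich_eq_F eq_F_teich_lift teich_lift_in_teich by blast

lemma teich_lift_eq_iff: "c \<in> T \<Longrightarrow> teich_lift x = c \<longleftrightarrow> x =\<^sub>F c"
  using teich_lift_eqI eq_F_teich_lift by blast

lemma double_eq_R_imp_eq_F: "2 * a =\<^sub>R 2 * b \<Longrightarrow> a =\<^sub>F b"
proof -
  assume "2 * a =\<^sub>R 2 * b"
  define r where "r = reduce (a - b)"
  have "2 * r =\<^sub>R 2 * (a - b)"
    unfolding r_def by (rule eq_R_mult[OF eq_R_refl eq_R_sym[OF eq_R_reduce]])
  also have "\<dots> = 2 * a - 2 * b"
    by (simp add: algebra_simps)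
  also have "\<dots> =\<^sub>R 0"
    using \<open>2 * a =\<^sub>R 2 * b\<close> by (simp add: eq_R_def)
  finally have "2 * r =\<^sub>R 0" .
  moreover have "degree (2 * r) < m"
    using degree_add_le_max[of r r] degree_reduce[of "a - b"] unfolding r_def mult_2 by simp
  ultimately have "2 * r = 0"
    using eq_R_canonical m_pos by simp
  define h where "h = map_poly high_digit r"
  have "r = 2 * h"
    unfolding h_def by (rule poly_double_eq_0_imp) fact
  then have "a - b =\<^sub>R 2 * h"
    using eq_R_reduce[of "a - b"] by (simp add: r_def)
  then obtain k where "a - b - 2 * h = f * k"
    unfolding eq_R_def by (elim dvdE)
  then have "a - b = 2 * h + f * k"
    by (simp add: diff_eq_eq add.commute)
  then show ?thesis
    by (rule eq_F_intro)
qed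

lemma teich_two_adic_expansion: "\<exists>U V. U \<in> T \<and> V \<in> T \<and> r =\<^sub>R U + 2 * V"
proof -
  obtain c k where "r - teich_lift r = 2 * c + f * k"
    using eq_F_teich_lift[of r] unfolding eq_F_def by blast
  then have "r - (teich_lift r + 2 * c) = f * k"
    by (simp add: algebra_simps)
  then have "r =\<^sub>R teich_lift r + 2 * c"
    unfolding eq_R_def by simp
  also have "\<dots> =\<^sub>R teich_lift r + 2 * teich_lift c"
    by (rule eq_R_add[OF eq_R_refl eq_F_imp_double_eq_R[OF eq_F_teich_lift]])
  finally show ?thesis
    using teich_lift_in_teich by blast
qed

lemma teich_two_adic_unique:
  assumes "U \<in> T" "V \<in> T" "U' \<in> T" "V' \<in> T" "U + 2 * V =\<^sub>R U' + 2 * V'"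
  shows "U = U'" "V = V'"
proof -
  obtain k where k: "U + 2 * V - (U' + 2 * V') = f * k"
    using assms(5) unfolding eq_R_def by (elim dvdE)
  then have "U - U' = 2 * (V' - V) + f * k"
    by (simp add: algebra_simps)
  then show "U = U'"
    using assms(1,3) eq_F_intro teich_eq_F_imp_eq by blast
  then have "2 * V =\<^sub>R 2 * V'"
    using k unfolding eq_R_def by (simp add: algebra_simps)
  then show "V = V'"
    using assms(2,4) double_eq_R_imp_eq_F teich_eq_F_imp_eq by blast
qed

lemma teich_lift_cong: "a =\<^sub>F b \<Longrightarrow> teich_lift a = teich_lift b"
  by (rule teich_lift_eqI[OF teich_lift_in_teich]) (rule eq_F_trans[OF _ eq_F_teich_lift])

lemma teich_mult_closed:
  assumes "x \<in> T" "y \<in> T"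
  shows "x * y =\<^sub>R teich_lift (x * y)"
proof -
  have "\<exists>z \<in> T. x * y =\<^sub>R z"
  proof (cases "x = 0 \<or> y = 0")
    case True
    then have "x * y =\<^sub>R 0"
      by auto
    then show ?thesis
      using zero_in_teich by blast
  next
    case False
    then obtain i j where "x =\<^sub>R \<beta> ^ i" "y =\<^sub>R \<beta> ^ j"
      using assms teich_nonzero_imp by blast
    then have "x * y =\<^sub>R \<beta> ^ (i + j)"
      using eq_R_mult by (simp add: power_add)
    also have "\<dots> =\<^sub>R reduce (\<beta> ^ (i + j))"
      by (rule eq_R_reduce)
    finally show ?thesis
      using reduce_beta_pow_in_teich by blast
  qed
  then show ?thesis
    using teich_lift_eqI eq_F_if_eq_R by force
qed

lemma teich_pow_closed: "x \<in> T \<Longrightarrow> x ^ k =\<^sub>R teich_lift (x ^ k)"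
proof (induction k)
  case (Suc k)
  have "x ^ Suc k =\<^sub>R x * teich_lift (x ^ k)"
    using eq_R_mult[OF eq_R_refl Suc.IH[OF Suc.prems]] by simp
  also have "\<dots> =\<^sub>R teich_lift (x * teich_lift (x ^ k))"
    using Suc.prems by (simp add: teich_mult_closed)
  also have "teich_lift (x * teich_lift (x ^ k)) = teich_lift (x ^ Suc k)"
    by (rule teich_lift_cong) (simp add: eq_F_mult eq_F_sym[OF eq_F_teich_lift])
  finally show ?case .
qed (simp add: teich_lift_eqI[OF one_in_teich eq_F_refl])

lemma teich_pow_card: "x \<in> T \<Longrightarrow> x ^ 2 ^ m =\<^sub>R x"
proof (cases "x = 0")
  case False
  assume "x \<in> T"
  then obtain i where i: "x =\<^sub>R \<beta> ^ i"
    using False teich_nonzero_imp by blast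
  define n :: nat where "n = 2 ^ m - 1"
  have "2 ^ m = n + 1"
    using order_pos unfolding n_def by simp
  then have "(i * 2 ^ m) mod n = i mod n"
    by (simp add: algebra_simps)
  then have "\<beta> ^ (i * 2 ^ m) =\<^sub>R \<beta> ^ i"
    unfolding n_def by (simp add: beta_pow_eq_R_iff)
  then show ?thesis
    using eq_R_pow[OF i, of "2 ^ m"] eq_R_sym[OF i] eq_R_trans by (metis power_mult)
qed (simp add: power_0_left)

lemma teich_square_inj:
  assumes "x \<in> T" "y \<in> T" "x\<^sup>2 =\<^sub>R y\<^sup>2"
  shows "x = y"
proof -
  have pow: "(z\<^sup>2) ^ 2 ^ (m - 1) = z ^ 2 ^ m" for z :: "4 poly"
    using m_pos by (simp flip: power_mult power_Suc)
  have "x =\<^sub>R x ^ 2 ^ m"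
    using eq_R_sym[OF teich_pow_card[OF assms(1)]] .
  also have "\<dots> =\<^sub>R y ^ 2 ^ m"
    using eq_R_pow[OF assms(3), of "2 ^ (m - 1)"] by (simp only: pow)
  also have "\<dots> =\<^sub>R y"
    using teich_pow_card[OF assms(2)] .
  finally show ?thesis
    using assms teich_eq_R_imp_eq by blast
qed

lemma teich_sqrt_exists: "x \<in> T \<Longrightarrow> \<exists>g \<in> T. g\<^sup>2 =\<^sub>R x"
proof -
  assume "x \<in> T"
  define g where "g = teich_lift (x ^ 2 ^ (m - 1))"
  have "g\<^sup>2 =\<^sub>R (x ^ 2 ^ (m - 1))\<^sup>2"
    unfolding g_def by (rule eq_R_pow[OF eq_R_sym[OF teich_pow_closed[OF \<open>x \<in> T\<close>]]])
  also have "\<dots> = x ^ 2 ^ m"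
    using m_pos by (simp flip: power_mult power_Suc2)
  also have "\<dots> =\<^sub>R x"
    using teich_pow_card[OF \<open>x \<in> T\<close>] .
  finally show ?thesis
    unfolding g_def using teich_lift_in_teich by blast
qed

lemma teich_inverse_exists: "x \<in> T \<Longrightarrow> x \<noteq> 0 \<Longrightarrow> \<exists>y \<in> T. x * y =\<^sub>R 1"
proof -
  assume "x \<in> T" "x \<noteq> 0"
  then obtain i where i: "x =\<^sub>R \<beta> ^ i"
    using teich_nonzero_imp by blast
  define y where "y = reduce (\<beta> ^ ((2 ^ m - 2) * i))"
  have "x * y =\<^sub>R \<beta> ^ i * \<beta> ^ ((2 ^ m - 2) * i)"
    unfolding y_def by (rule eq_R_mult[OF i eq_R_sym[OF eq_R_reduce]])
  also have "\<dots> = \<beta> ^ ((2 ^ m - 1) * i)"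
    using order_pos by (simp add: algebra_simps flip: power_add)
  also have "\<dots> =\<^sub>R 1"
    by (rule beta_pow_multiple)
  finally show ?thesis
    unfolding y_def using reduce_beta_pow_in_teich by blast
qed

lemma eq_F_mult_cancel_iff:
  assumes "a \<in> T" "a \<noteq> 0"
  shows "a * x =\<^sub>F a * y \<longleftrightarrow> x =\<^sub>F y"
proof
  assume "a * x =\<^sub>F a * y"
  obtain b where "a * b =\<^sub>R 1"
    using assms(1,2) teich_inverse_exists by blast
  then have one: "1 =\<^sub>F a * b"
    by (rule eq_F_if_eq_R[OF eq_R_sym])
  have "x = 1 * x"
    by simp
  also have "\<dots> =\<^sub>F (a * b) * x"
    by (rule eq_F_mult[OF one eq_F_refl])
  also have "\<dots> = b * (a * x)"
    by (simp add: ac_simps)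
  also have "\<dots> =\<^sub>F b * (a * y)"
    by (rule eq_F_mult[OF eq_F_refl \<open>a * x =\<^sub>F a * y\<close>])
  also have "\<dots> = (a * b) * y"
    by (simp add: ac_simps)
  also have "\<dots> =\<^sub>F 1 * y"
    by (rule eq_F_mult[OF eq_F_sym[OF one] eq_F_refl])
  finally show "x =\<^sub>F y"
    by simp
qed (rule eq_F_mult[OF eq_F_refl])

lemma teich_quotient_exists:
  assumes "a \<in> T" "a \<noteq> 0"
  shows "\<exists>b \<in> T. a * b =\<^sub>F c"
proof -
  obtain a' where "a * a' =\<^sub>R 1"
    using teich_inverse_exists assms by blast
  have "a * teich_lift (a' * c) =\<^sub>F a * (a' * c)"
    by (rule eq_F_mult[OF eq_F_refl eq_F_sym[OF eq_F_teich_lift]])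
  also have "\<dots> = (a * a') * c"
    by (simp add: ac_simps)
  also have "\<dots> =\<^sub>F 1 * c"
    by (rule eq_F_mult[OF eq_F_if_eq_R[OF \<open>a * a' =\<^sub>R 1\<close>] eq_F_refl])
  finally show ?thesis
    using teich_lift_in_teich by force
qed

lemma teich_mult_eq_F_0_iff:
  assumes "x \<in> T" "y \<in> T"
  shows "x * y =\<^sub>F 0 \<longleftrightarrow> x = 0 \<or> y = 0"
proof
  assume "x * y =\<^sub>F 0"
  show "x = 0 \<or> y = 0"
  proof (rule ccontr)
    assume "\<not> (x = 0 \<or> y = 0)"
    then obtain i j where "x =\<^sub>R \<beta> ^ i" "y =\<^sub>R \<beta> ^ j"
      using assms teich_nonzero_imp by blast
    then have "\<beta> ^ (i + j) =\<^sub>R x * y"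
      using eq_R_sym[OF eq_R_mult] by (simp add: power_add)
    then have "\<beta> ^ (i + j) =\<^sub>F 0"
      using \<open>x * y =\<^sub>F 0\<close> by (rule eq_R_eq_F_trans)
    then show False
      using beta_pow_not_eq_F_0 by blast
  qed
qed auto

section \<open>Counting in the residue field\<close>

lemma bij_teich_square: "bij_betw (\<lambda>x. teich_lift (x\<^sup>2)) T T"
proof -
  have "inj_on (\<lambda>x. teich_lift (x\<^sup>2)) T"
  proof (rule inj_onI)
    fix x y assume xy: "x \<in> T" "y \<in> T" "teich_lift (x\<^sup>2) = teich_lift (y\<^sup>2)"
    have "x\<^sup>2 =\<^sub>R teich_lift (x\<^sup>2)"
      using teich_pow_closed[OF xy(1)] .
    also have "\<dots> =\<^sub>R y\<^sup>2"
      unfolding xy(3) using eq_R_sym[OF teich_pow_closed[OF xy(2)]] .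
    finally show "x = y"
      using xy teich_square_inj by blast
  qed
  moreover have "(\<lambda>x. teich_lift (x\<^sup>2)) ` T \<subseteq> T"
    by auto
  ultimately show ?thesis
    using endo_inj_surj[OF finite_teich] by (simp add: bij_betw_def)
qed

lemma bij_teich_scale:
  assumes "g \<in> T" "g \<noteq> 0"
  shows "bij_betw (\<lambda>x. teich_lift (g * x)) T T"
proof -
  have "inj_on (\<lambda>x. teich_lift (g * x)) T"
  proof (rule inj_onI)
    fix x y assume xy: "x \<in> T" "y \<in> T" "teich_lift (g * x) = teich_lift (g * y)"
    have "g * x =\<^sub>F g * y"
      using eq_F_teich_lift[of "g * x"] eq_F_sym[OF eq_F_teich_lift[of "g * y"]]
      unfolding xy(3) by (rule eq_F_trans)
    then have "x =\<^sub>F y"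
      by (simp add: eq_F_mult_cancel_iff[OF assms])
    then show "x = y"
      using xy(1,2) teich_eq_F_imp_eq by blast
  qed
  moreover have "(\<lambda>x. teich_lift (g * x)) ` T \<subseteq> T"
    by auto
  ultimately show ?thesis
    using endo_inj_surj[OF finite_teich] by (simp add: bij_betw_def)
qed

lemma card_teich_mult_eq_F_0:
  assumes "c =\<^sub>F 0"
  shows "card {(a, b) \<in> T \<times> T. a * b =\<^sub>F c} = 2 * 2 ^ m - 1"
proof -
  have "{(a, b) \<in> T \<times> T. a * b =\<^sub>F c} = {0} \<times> T \<union> T \<times> {0}"
    using teich_mult_eq_F_0_iff by (auto simp: eq_F_iff_right[OF assms])
  moreover have "card ({0} \<times> T \<union> T \<times> {0}) = 2 * 2 ^ m - 1"
    using card_Un_Int[of "{0} \<times> T" "T \<times> {0}"] finite_teich card_teich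
    by (simp add: card_cartesian_product Times_Int_Times)
  ultimately show ?thesis
    by simp
qed

lemma card_teich_mult_eq_F_nonzero:
  assumes "\<not> c =\<^sub>F 0"
  shows "card {(a, b) \<in> T \<times> T. a * b =\<^sub>F c} = 2 ^ m - 1"
proof -
  let ?S = "{(a, b) \<in> T \<times> T. a * b =\<^sub>F c}"
  have "bij_betw fst ?S (T - {0})"
  proof (rule bij_betw_imageI)
    show "inj_on fst ?S"
    proof (rule inj_onI)
      fix p p' assume "p \<in> ?S" "p' \<in> ?S" "fst p = fst p'"
      then obtain a b b' where ab: "p = (a, b)" "p' = (a, b')" "a \<in> T" "b \<in> T" "b' \<in> T"
        and "a * b =\<^sub>F c" "a * b' =\<^sub>F c"
        by auto
      moreover from this have "a \<noteq> 0"
        using assms eq_F_sym[of "a * b" c] by auto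
      moreover have "a * b =\<^sub>F a * b'"
        using \<open>a * b =\<^sub>F c\<close> \<open>a * b' =\<^sub>F c\<close> by (rule eq_F_trans[OF _ eq_F_sym])
      ultimately have "b =\<^sub>F b'"
        by (simp add: eq_F_mult_cancel_iff)
      then show "p = p'"
        using ab teich_eq_F_imp_eq by blast
    qed
    show "fst ` ?S = T - {0}"
    proof (intro equalityI subsetI)
      fix a assume "a \<in> fst ` ?S"
      then obtain b where "a \<in> T" "a * b =\<^sub>F c"
        by auto
      then show "a \<in> T - {0}"
        using assms eq_F_sym[of "a * b" c] by auto
    next
      fix a assume "a \<in> T - {0}"
      then obtain b where "b \<in> T" "a * b =\<^sub>F c"
        using teich_quotient_exists by blast
      with \<open>a \<in> T - {0}\<close> have "(a, b) \<in> ?S"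
        by simp
      then show "a \<in> fst ` ?S"
        by (rule image_eqI[rotated]) simp
    qed
  qed
  then show ?thesis
    using bij_betw_same_card finite_teich card_teich by fastforce
qed

text \<open>A root of \<open>t\<^sup>2 + t + 1\<close> would be a cube root of unity \<open>\<noteq> 1\<close> in \<open>F\<^sup>*\<close>, a cyclic group of order
  \<open>2\<^sup>m - 1\<close>, which is prime to \<open>3\<close> for odd \<open>m\<close>.\<close>

lemma teich_not_root_of_cyclotomic_3:
  assumes "odd m" "t \<in> T"
  shows "\<not> t\<^sup>2 + t + 1 =\<^sub>F 0"
proof
  assume t_root: "t\<^sup>2 + t + 1 =\<^sub>F 0"
  have "t ^ 3 = (t - 1) * (t\<^sup>2 + t + 1) + 1"
    by (simp add: power2_eq_square power3_eq_cube algebra_simps)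
  also have "\<dots> =\<^sub>F (t - 1) * 0 + 1"
    by (intro eq_F_add eq_F_mult eq_F_refl t_root)
  finally have t_cube: "t ^ 3 =\<^sub>F 1"
    by simp
  have "t \<noteq> 0"
    using t_root one_not_eq_F_0 by auto
  then obtain i where i: "t =\<^sub>R \<beta> ^ i"
    using teich_nonzero_imp assms(2) by blast
  have "\<beta> ^ (3 * i) = (\<beta> ^ i) ^ 3"
    by (simp add: power_mult mult.commute)
  also have "\<dots> =\<^sub>R t ^ 3"
    by (rule eq_R_pow[OF eq_R_sym[OF i]])
  also note t_cube
  finally have "(2 ^ m - 1) dvd 3 * i"
    by (rule beta_pow_eq_F_1_imp)
  then have "(2 ^ m - 1) dvd i"
    using coprime_dvd_mult_right_iff[OF coprime_two_pow_minus_one_3[OF assms(1)]] by blast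
  then have "t =\<^sub>R 1"
    using eq_R_trans[OF i] beta_pow_eq_R_1_iff by blast
  then have "t = 1"
    using assms(2) one_in_teich teich_eq_R_imp_eq by blast
  then have "1 + 1 + 1 =\<^sub>F 0"
    using t_root by simp
  moreover have "1 =\<^sub>F 1 + 1 + 1"
    by (rule eq_F_if_diff_double[of _ _ "- 1"]) simp
  ultimately show False
    using one_not_eq_F_0 eq_F_trans[of 1 "1 + 1 + 1" 0] by blast
qed

lemma norm_form_eq_F_0_iff:
  assumes "odd m" "a \<in> T" "b \<in> T"
  shows "a\<^sup>2 + a * b + b\<^sup>2 =\<^sub>F 0 \<longleftrightarrow> a = 0 \<and> b = 0"
proof
  assume Q: "a\<^sup>2 + a * b + b\<^sup>2 =\<^sub>F 0"
  show "a = 0 \<and> b = 0"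
  proof (cases "b = 0")
    case True
    then have "a * a =\<^sub>F 0"
      using Q by (simp add: power2_eq_square)
    then show ?thesis
      using True teich_mult_eq_F_0_iff assms(2) by blast
  next
    case False
    then obtain b' where "b' \<in> T" "b * b' =\<^sub>R 1"
      using teich_inverse_exists assms(3) by blast
    define t where "t = teich_lift (a * b')"
    have t: "t =\<^sub>F a * b'"
      unfolding t_def by (rule eq_F_sym[OF eq_F_teich_lift])
    have one: "1 =\<^sub>F b * b'"
      by (rule eq_F_sym[OF eq_F_if_eq_R]) fact
    have "t\<^sup>2 + t * 1 + 1\<^sup>2 =\<^sub>F (a * b')\<^sup>2 + (a * b') * (b * b') + (b * b')\<^sup>2"
      by (intro eq_F_add eq_F_mult eq_F_pow t one)
    also have "\<dots> = (a\<^sup>2 + a * b + b\<^sup>2) * b'\<^sup>2"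
      by (simp add: power2_eq_square algebra_simps)
    also have "\<dots> =\<^sub>F 0 * b'\<^sup>2"
      by (rule eq_F_mult[OF Q eq_F_refl])
    finally have "t\<^sup>2 + t + 1 =\<^sub>F 0"
      by simp
    then show ?thesis
      using teich_not_root_of_cyclotomic_3[OF assms(1)] t_def by simp
  qed
qed simp

lemma card_norm_form_scale:
  assumes "c \<in> T" "c \<noteq> 0"
  shows "card {(a, b) \<in> T \<times> T. a\<^sup>2 + a * b + b\<^sup>2 =\<^sub>F c} = card {(a, b) \<in> T \<times> T. a\<^sup>2 + a * b + b\<^sup>2 =\<^sub>F 1}"
proof -
  obtain g where g: "g \<in> T" "g\<^sup>2 =\<^sub>R c"
    using teich_sqrt_exists[OF assms(1)] by blast
  have "g \<noteq> 0"
    using g assms teich_eq_R_imp_eq[of 0 c] by (auto simp: power2_eq_square)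
  have c: "c =\<^sub>F g * (g * 1)"
    using eq_F_if_eq_R[OF eq_R_sym[OF g(2)]] by (simp add: power2_eq_square)
  define s where "s x = teich_lift (g * x)" for x
  have s: "s x =\<^sub>F g * x" for x
    unfolding s_def by (rule eq_F_sym[OF eq_F_teich_lift])
  have "card {(a, b) \<in> T \<times> T. a\<^sup>2 + a * b + b\<^sup>2 =\<^sub>F 1} = card {(a, b) \<in> T \<times> T. a\<^sup>2 + a * b + b\<^sup>2 =\<^sub>F c}"
  proof (rule card_bij_betw_subsets)
    show "bij_betw (map_prod s s) (T \<times> T) (T \<times> T)"
      unfolding s_def by (intro bij_betw_map_prod bij_teich_scale g(1) \<open>g \<noteq> 0\<close>)
  next
    fix p assume "p \<in> T \<times> T"
    then obtain a b where p: "p = (a, b)" "a \<in> T" "b \<in> T"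
      by blast
    have "(s a)\<^sup>2 + s a * s b + (s b)\<^sup>2 =\<^sub>F (g * a)\<^sup>2 + (g * a) * (g * b) + (g * b)\<^sup>2"
      by (intro eq_F_add eq_F_mult eq_F_pow s)
    also have "\<dots> = g * (g * (a\<^sup>2 + a * b + b\<^sup>2))"
      by (simp add: power2_eq_square algebra_simps)
    finally have scaled: "(s a)\<^sup>2 + s a * s b + (s b)\<^sup>2 =\<^sub>F g * (g * (a\<^sup>2 + a * b + b\<^sup>2))" .
    have "(s a)\<^sup>2 + s a * s b + (s b)\<^sup>2 =\<^sub>F c \<longleftrightarrow> a\<^sup>2 + a * b + b\<^sup>2 =\<^sub>F 1"
      by (simp only: eq_F_iff_left[OF scaled] eq_F_iff_right[OF c] eq_F_mult_cancel_iff[OF g(1) \<open>g \<noteq> 0\<close>])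
    then show "p \<in> {(a, b) \<in> T \<times> T. a\<^sup>2 + a * b + b\<^sup>2 =\<^sub>F 1}
        \<longleftrightarrow> map_prod s s p \<in> {(a, b) \<in> T \<times> T. a\<^sup>2 + a * b + b\<^sup>2 =\<^sub>F c}"
      using p by (simp add: s_def)
  qed auto
  then show ?thesis
    by simp
qed

lemma sum_card_norm_form: "(\<Sum>c \<in> T. card {(a, b) \<in> T \<times> T. a\<^sup>2 + a * b + b\<^sup>2 =\<^sub>F c}) = 2 ^ m * 2 ^ m"
proof -
  have "(\<Sum>c \<in> T. card {(a, b) \<in> T \<times> T. a\<^sup>2 + a * b + b\<^sup>2 =\<^sub>F c})
      = (\<Sum>c \<in> T. card {p \<in> T \<times> T. teich_lift ((fst p)\<^sup>2 + fst p * snd p + (snd p)\<^sup>2) = c})"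
    by (intro sum.cong refl arg_cong[where f = card]) (auto simp: teich_lift_eq_iff)
  also have "\<dots> = card (T \<times> T)"
    using finite_teich by (intro card_eq_sum_card_fibres[symmetric]) auto
  finally show ?thesis
    using card_teich by (simp add: card_cartesian_product)
qed

lemma card_norm_form_eq_F:
  assumes "odd m"
  shows "card {(a, b) \<in> T \<times> T. a\<^sup>2 + a * b + b\<^sup>2 =\<^sub>F c} = (if c =\<^sub>F 0 then 1 else 2 ^ m + 1)"
proof -
  define N where "N c = card {(a, b) \<in> T \<times> T. a\<^sup>2 + a * b + b\<^sup>2 =\<^sub>F c}" for c
  have N_cong: "N c = N c'" if "c =\<^sub>F c'" for c c'
    unfolding N_def by (simp add: eq_F_iff_right[OF that])
  have "{(a, b) \<in> T \<times> T. a\<^sup>2 + a * b + b\<^sup>2 =\<^sub>F 0} = {(0, 0)}"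
    using norm_form_eq_F_0_iff[OF assms] by (auto simp: power2_eq_square)
  then have N_0: "N 0 = 1"
    unfolding N_def by simp
  have "2 ^ m * 2 ^ m = (\<Sum>c \<in> T. N c)"
    using sum_card_norm_form unfolding N_def by simp
  also have "\<dots> = N 0 + (\<Sum>c \<in> T - {0}. N c)"
    using finite_teich zero_in_teich by (rule sum.remove)
  also have "\<dots> = N 0 + (\<Sum>c \<in> T - {0}. N 1)"
    unfolding N_def by (intro arg_cong[where f = "(+) _"] sum.cong refl card_norm_form_scale) auto
  also have "\<dots> = 1 + (2 ^ m - 1) * N 1"
    using N_0 finite_teich card_teich by simp
  finally have "(2 ^ m - 1) * N 1 = (2 ^ m - 1) * (2 ^ m + 1)"
    by (simp add: algebra_simps)
  moreover have "(2 :: nat) ^ m - 1 \<noteq> 0"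
    using order_pos by simp
  ultimately have N_1: "N 1 = 2 ^ m + 1"
    by (metis mult_left_cancel)
  have "N c = N (teich_lift c)"
    by (rule N_cong[OF eq_F_teich_lift])
  also have "\<dots> = (if c =\<^sub>F 0 then 1 else 2 ^ m + 1)"
  proof (cases "c =\<^sub>F 0")
    case True
    then have "teich_lift c = 0"
      by (simp add: teich_lift_eq_iff)
    then show ?thesis
      using True N_0 by simp
  next
    case False
    then have "teich_lift c \<noteq> 0"
      using eq_F_teich_lift[of c] by auto
    then show ?thesis
      using False card_norm_form_scale[OF teich_lift_in_teich] N_1 unfolding N_def by simp
  qed
  finally show ?thesis
    unfolding N_def .
qed

lemma teich_lift_shift_twice: "x \<in> T \<Longrightarrow> teich_lift (teich_lift (x + u) + u) = x"
proof (rule teich_lift_eqI)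
  have "teich_lift (x + u) + u =\<^sub>F x + u + u"
    by (rule eq_F_add[OF eq_F_sym[OF eq_F_teich_lift] eq_F_refl])
  also have "\<dots> =\<^sub>F x"
    by (rule eq_F_if_diff_double[of _ _ u]) (simp add: algebra_simps)
  finally show "teich_lift (x + u) + u =\<^sub>F x" .
qed

lemma teich_lift_shift_sum:
  assumes "z \<in> T" "x + y + z =\<^sub>F u"
  shows "teich_lift (teich_lift (x + u) + teich_lift (y + u) + u) = z"
proof (rule teich_lift_eqI[OF assms(1)])
  have "teich_lift (x + u) + teich_lift (y + u) + u =\<^sub>F (x + u) + (y + u) + u"
    by (intro eq_F_add eq_F_refl eq_F_sym[OF eq_F_teich_lift])
  also have "\<dots> =\<^sub>F u + x + y"
    by (rule eq_F_if_diff_double[of _ _ u]) (simp add: algebra_simps)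
  also have "\<dots> =\<^sub>F x + y + z + x + y"
    by (intro eq_F_add eq_F_refl eq_F_sym[OF assms(2)])
  also have "\<dots> =\<^sub>F z"
    by (rule eq_F_if_diff_double[of _ _ "x + y"]) (simp add: algebra_simps)
  finally show "teich_lift (x + u) + teich_lift (y + u) + u =\<^sub>F z" .
qed

lemma shifted_lifts_sum: "teich_lift (a + u) + teich_lift (b + u) + teich_lift (a + b + u) =\<^sub>F u"
proof -
  have "teich_lift (a + u) + teich_lift (b + u) + teich_lift (a + b + u) =\<^sub>F (a + u) + (b + u) + (a + b + u)"
    by (intro eq_F_add eq_F_sym[OF eq_F_teich_lift])
  also have "\<dots> =\<^sub>F u"
    by (rule eq_F_if_diff_double[of _ _ "a + b + u"]) (simp add: algebra_simps)
  finally show ?thesis .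
qed

text \<open>The substitution \<open>a = x + u\<close>, \<open>b = y + u\<close> parametrises the solutions of \<open>x + y + z = u\<close>
  in the residue field, as then \<open>z = a + b + u\<close>.\<close>

lemma bij_shift_substitution:
  assumes "u \<in> T"
  shows "bij_betw (\<lambda>(x, y, z). (teich_lift (x + u), teich_lift (y + u)))
           {(x, y, z) \<in> T \<times> T \<times> T. x + y + z =\<^sub>F u} (T \<times> T)"
  by (rule bij_betw_byWitness[where f' = "\<lambda>(a, b). (teich_lift (a + u), teich_lift (b + u), teich_lift (a + b + u))"])
    (auto simp: teich_lift_shift_twice teich_lift_shift_sum shifted_lifts_sum)

lemma card_shift_substitution:
  assumes "u \<in> T"
    and "\<And>x y z. x \<in> T \<Longrightarrow> y \<in> T \<Longrightarrow> z \<in> T \<Longrightarrow> z =\<^sub>F x + y + u \<Longrightarrow>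
      P x y z \<longleftrightarrow> Q (teich_lift (x + u)) (teich_lift (y + u))"
  shows "card {(x, y, z) \<in> T \<times> T \<times> T. x + y + z =\<^sub>F u \<and> P x y z} = card {(a, b) \<in> T \<times> T. Q a b}"
proof (rule card_bij_betw_subsets[OF bij_shift_substitution[OF assms(1)]])
  fix p assume "p \<in> {(x, y, z) \<in> T \<times> T \<times> T. x + y + z =\<^sub>F u}"
  then obtain x y z where "p = (x, y, z)" "x \<in> T" "y \<in> T" "z \<in> T" "x + y + z =\<^sub>F u"
    by auto
  moreover from this have "z =\<^sub>F x + y + u"
    using eq_F_iff_of_diff[of "x + y + z" u z "x + y + u" "x + y"] by (simp add: algebra_simps)
  ultimately show "p \<in> {(x, y, z) \<in> T \<times> T \<times> T. x + y + z =\<^sub>F u \<and> P x y z}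
      \<longleftrightarrow> (\<lambda>(x, y, z). (teich_lift (x + u), teich_lift (y + u))) p \<in> {(a, b) \<in> T \<times> T. Q a b}"
    using assms(2) by simp
qed auto

lemma card_shift_norm_form:
  assumes "u \<in> T"
  shows "card {(x, y, z) \<in> T \<times> T \<times> T. x + y + z =\<^sub>F u \<and> x * y + y * z + z * x =\<^sub>F w}
       = card {(a, b) \<in> T \<times> T. a\<^sup>2 + a * b + b\<^sup>2 =\<^sub>F w + u\<^sup>2}"
proof (rule card_shift_substitution[OF assms])
  fix x y z assume "z =\<^sub>F x + y + u"
  let ?a = "teich_lift (x + u)" and ?b = "teich_lift (y + u)"
  have "?a\<^sup>2 + ?a * ?b + ?b\<^sup>2 =\<^sub>F (x + u)\<^sup>2 + (x + u) * (y + u) + (y + u)\<^sup>2"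
    by (intro eq_F_add eq_F_mult eq_F_pow eq_F_sym[OF eq_F_teich_lift])
  also have "\<dots> =\<^sub>F x * y + y * (x + y + u) + (x + y + u) * x + u\<^sup>2"
    by (rule eq_F_if_diff_double[of _ _ "x * u + y * u + u\<^sup>2 - x * y"])
      (simp add: power2_eq_square algebra_simps)
  also have "\<dots> =\<^sub>F x * y + y * z + z * x + u\<^sup>2"
    by (intro eq_F_add eq_F_mult eq_F_refl eq_F_sym[OF \<open>z =\<^sub>F x + y + u\<close>])
  finally have lifted: "?a\<^sup>2 + ?a * ?b + ?b\<^sup>2 =\<^sub>F x * y + y * z + z * x + u\<^sup>2" .
  show "x * y + y * z + z * x =\<^sub>F w \<longleftrightarrow> ?a\<^sup>2 + ?a * ?b + ?b\<^sup>2 =\<^sub>F w + u\<^sup>2"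
    by (simp only: eq_F_iff_left[OF lifted] eq_F_add_cancel_right)
qed

lemma card_shift_product:
  assumes "u \<in> T"
  shows "card {(x, y, z) \<in> T \<times> T \<times> T. x + y + z =\<^sub>F u \<and> x * y + y * z + z * x + z\<^sup>2 =\<^sub>F w}
       = card {(a, b) \<in> T \<times> T. a * b =\<^sub>F w}"
proof (rule card_shift_substitution[OF assms])
  fix x y z assume "z =\<^sub>F x + y + u"
  have "teich_lift (x + u) * teich_lift (y + u) =\<^sub>F (x + u) * (y + u)"
    by (intro eq_F_mult eq_F_sym[OF eq_F_teich_lift])
  also have "\<dots> =\<^sub>F x * y + y * (x + y + u) + (x + y + u) * x + (x + y + u)\<^sup>2"
    by (rule eq_F_if_diff_double[of _ _ "(x + y)\<^sup>2 + u * (x + y)"])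
      (simp add: power2_eq_square algebra_simps)
  also have "\<dots> =\<^sub>F x * y + y * z + z * x + z\<^sup>2"
    by (intro eq_F_add eq_F_mult eq_F_pow eq_F_refl eq_F_sym[OF \<open>z =\<^sub>F x + y + u\<close>])
  finally have lifted: "teich_lift (x + u) * teich_lift (y + u) =\<^sub>F x * y + y * z + z * x + z\<^sup>2" .
  show "x * y + y * z + z * x + z\<^sup>2 =\<^sub>F w \<longleftrightarrow> teich_lift (x + u) * teich_lift (y + u) =\<^sub>F w"
    by (simp only: eq_F_iff_left[OF lifted])
qed

section \<open>Sums of three Teichmueller elements\<close>

lemma square_plus_double_eq_R_iff:
  assumes "u \<in> T" "U \<in> T" "V \<in> T" "u\<^sup>2 =\<^sub>R U"
  shows "a\<^sup>2 + 2 * c =\<^sub>R U + 2 * V \<longleftrightarrow> a =\<^sub>F u \<and> c =\<^sub>F V"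
proof
  assume "a =\<^sub>F u \<and> c =\<^sub>F V"
  then have "a\<^sup>2 =\<^sub>R U" "2 * c =\<^sub>R 2 * V"
    using eq_R_trans[OF eq_F_imp_square_eq_R assms(4)] eq_F_imp_double_eq_R by blast+
  then show "a\<^sup>2 + 2 * c =\<^sub>R U + 2 * V"
    by (rule eq_R_add)
next
  assume h: "a\<^sup>2 + 2 * c =\<^sub>R U + 2 * V"
  let ?A = "teich_lift a" and ?C = "teich_lift c"
  have "teich_lift (?A\<^sup>2) + 2 * ?C =\<^sub>R ?A\<^sup>2 + 2 * ?C"
    by (rule eq_R_add[OF eq_R_sym[OF teich_pow_closed] eq_R_refl]) simp
  also have "\<dots> =\<^sub>R a\<^sup>2 + 2 * c"
    by (intro eq_R_add eq_F_imp_square_eq_R eq_F_imp_double_eq_R eq_F_sym[OF eq_F_teich_lift])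
  also note h
  finally have "teich_lift (?A\<^sup>2) = U" "?C = V"
    using teich_two_adic_unique[OF teich_lift_in_teich teich_lift_in_teich assms(2,3)] by blast+
  then have "?A\<^sup>2 =\<^sub>R u\<^sup>2"
    using teich_pow_closed[of ?A 2] eq_R_sym[OF assms(4)] by (simp add: eq_R_trans)
  then have "?A = u"
    using teich_square_inj[OF teich_lift_in_teich assms(1)] by blast
  then show "a =\<^sub>F u \<and> c =\<^sub>F V"
    using eq_F_teich_lift[of a] eq_F_teich_lift[of c] \<open>?C = V\<close> by simp
qed

text \<open>Squaring permutes \<open>T\<close>, and as \<open>4 = 0\<close> we have
  \<open>x\<^sup>2 + y\<^sup>2 + (1 - 2d) z\<^sup>2 = (x + y + z)\<^sup>2 + 2 (xy + yz + zx + d z\<^sup>2)\<close>, so by uniqueness of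
  \<open>2\<close>-adic digits a sum \<open>X + Y \<plusminus> Z\<close> of Teichmueller elements is governed by two equations in the
  residue field. The constant \<open>d\<close> (\<open>0\<close> or \<open>1\<close>) selects the sign.\<close>

lemma lifted_squares_sum_eq_iff:
  assumes "degree d = 0" "degree r < m" "U \<in> T" "V \<in> T" "r =\<^sub>R U + 2 * V" "u \<in> T" "u\<^sup>2 =\<^sub>R U"
    and "x \<in> T" "y \<in> T" "z \<in> T"
  shows "teich_lift (x\<^sup>2) + teich_lift (y\<^sup>2) + (1 - 2 * d) * teich_lift (z\<^sup>2) = r
    \<longleftrightarrow> x + y + z =\<^sub>F u \<and> x * y + y * z + z * x + d * z\<^sup>2 =\<^sub>F V"
proof -
  let ?S = "teich_lift (x\<^sup>2) + teich_lift (y\<^sup>2) + (1 - 2 * d) * teich_lift (z\<^sup>2)"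
  have "degree (1 - 2 * d) = 0"
    using degree_diff_le_max[of 1 "2 * d"] degree_mult_le[of 2 d] assms(1) by simp
  then have "degree ((1 - 2 * d) * teich_lift (z\<^sup>2)) < m"
    using degree_mult_le[of "1 - 2 * d" "teich_lift (z\<^sup>2)"] teich_degree[of "teich_lift (z\<^sup>2)"] by simp
  then have "degree ?S < m"
    using degree_add_le_max[of "teich_lift (x\<^sup>2) + teich_lift (y\<^sup>2)" "(1 - 2 * d) * teich_lift (z\<^sup>2)"]
      degree_add_le_max[of "teich_lift (x\<^sup>2)" "teich_lift (y\<^sup>2)"]
      teich_degree[of "teich_lift (x\<^sup>2)"] teich_degree[of "teich_lift (y\<^sup>2)"] by simp
  then have "?S = r \<longleftrightarrow> ?S =\<^sub>R r"
    using eq_R_canonical[OF _ assms(2), of ?S] by auto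
  also have "\<dots> \<longleftrightarrow> x\<^sup>2 + y\<^sup>2 + (1 - 2 * d) * z\<^sup>2 =\<^sub>R U + 2 * V"
  proof -
    have squares: "?S =\<^sub>R x\<^sup>2 + y\<^sup>2 + (1 - 2 * d) * z\<^sup>2"
      using eq_R_sym[OF teich_pow_closed] assms(8-10)
      by (intro eq_R_add eq_R_mult[OF eq_R_refl]) blast+
    show ?thesis
      by (simp only: eq_R_iff_left[OF squares] eq_R_iff_right[OF assms(5)])
  qed
  also have "x\<^sup>2 + y\<^sup>2 + (1 - 2 * d) * z\<^sup>2 = (x + y + z)\<^sup>2 + 2 * (x * y + y * z + z * x + d * z\<^sup>2)"
    by (simp only: square_sum_identity four_eq_0_poly mult_zero_left add_0_right)
  also have "\<dots> =\<^sub>R U + 2 * V \<longleftrightarrow> x + y + z =\<^sub>F u \<and> x * y + y * z + z * x + d * z\<^sup>2 =\<^sub>F V"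
    by (rule square_plus_double_eq_R_iff[OF assms(6,3,4,7)])
  finally show ?thesis .
qed

lemma card_sum_of_squares:
  assumes "degree d = 0" "degree r < m" "U \<in> T" "V \<in> T" "r =\<^sub>R U + 2 * V" "u \<in> T" "u\<^sup>2 =\<^sub>R U"
  shows "card {(X, Y, Z) \<in> T \<times> T \<times> T. X + Y + (1 - 2 * d) * Z = r}
       = card {(x, y, z) \<in> T \<times> T \<times> T. x + y + z =\<^sub>F u \<and> x * y + y * z + z * x + d * z\<^sup>2 =\<^sub>F V}"
proof -
  define s where "s x = teich_lift (x\<^sup>2)" for x
  have "card {(x, y, z) \<in> T \<times> T \<times> T. x + y + z =\<^sub>F u \<and> x * y + y * z + z * x + d * z\<^sup>2 =\<^sub>F V}
      = card {(X, Y, Z) \<in> T \<times> T \<times> T. X + Y + (1 - 2 * d) * Z = r}"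
  proof (rule card_bij_betw_subsets)
    show "bij_betw (map_prod s (map_prod s s)) (T \<times> T \<times> T) (T \<times> T \<times> T)"
      unfolding s_def by (intro bij_betw_map_prod bij_teich_square)
  next
    fix p assume "p \<in> T \<times> T \<times> T"
    then obtain x y z where p: "p = (x, y, z)" "x \<in> T" "y \<in> T" "z \<in> T"
      by auto
    then show "p \<in> {(x, y, z) \<in> T \<times> T \<times> T. x + y + z =\<^sub>F u \<and> x * y + y * z + z * x + d * z\<^sup>2 =\<^sub>F V}
        \<longleftrightarrow> map_prod s (map_prod s s) p \<in> {(X, Y, Z) \<in> T \<times> T \<times> T. X + Y + (1 - 2 * d) * Z = r}"
      using lifted_squares_sum_eq_iff[OF assms p(2-4)] by (simp add: s_def)
  qed auto
  then show ?thesis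
    by simp
qed

lemma mem_uminus_teich_iff:
  assumes "degree r < m" "U \<in> T" "V \<in> T" "r =\<^sub>R U + 2 * V"
  shows "r \<in> uminus ` T \<longleftrightarrow> V = U"
proof
  assume "V = U"
  then have "r =\<^sub>R - U"
    using assms(4) by (simp add: three_eq_minus_one_poly)
  then have "r = - U"
    using eq_R_canonical assms(1) teich_degree[OF assms(2)] by simp
  then show "r \<in> uminus ` T"
    using assms(2) by blast
next
  assume "r \<in> uminus ` T"
  then obtain t where "t \<in> T" "r = - t"
    by blast
  then have "U + 2 * V =\<^sub>R t + 2 * t"
    using eq_R_sym[OF assms(4)] by (simp add: three_eq_minus_one_poly)
  then show "V = U"
    using teich_two_adic_unique[OF assms(2,3) \<open>t \<in> T\<close> \<open>t \<in> T\<close>] by simp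
qed

lemma mem_teich_iff_two_adic:
  assumes "degree r < m" "U \<in> T" "V \<in> T" "r =\<^sub>R U + 2 * V"
  shows "r \<in> T \<longleftrightarrow> V = 0"
proof
  assume "V = 0"
  then have "r = U"
    using assms eq_R_canonical teich_degree by simp
  then show "r \<in> T"
    using assms(2) by simp
next
  assume "r \<in> T"
  have "r + 2 * 0 =\<^sub>R U + 2 * V"
    using assms(4) by simp
  then show "V = 0"
    using teich_two_adic_unique[OF \<open>r \<in> T\<close> zero_in_teich assms(2,3)] by simp
qed

lemma card_teich_sum_three:
  assumes "odd m" "degree r < m"
  shows "card {(X, Y, Z) \<in> T \<times> T \<times> T. X + Y + Z = r} = (if r \<in> uminus ` T then 1 else 2 ^ m + 1)"
proof -
  obtain U V where UV: "U \<in> T" "V \<in> T" "r =\<^sub>R U + 2 * V"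
    using teich_two_adic_expansion by blast
  obtain u where u: "u \<in> T" "u\<^sup>2 =\<^sub>R U"
    using teich_sqrt_exists[OF UV(1)] by blast
  have "card {(X, Y, Z) \<in> T \<times> T \<times> T. X + Y + Z = r}
      = card {(x, y, z) \<in> T \<times> T \<times> T. x + y + z =\<^sub>F u \<and> x * y + y * z + z * x =\<^sub>F V}"
    using card_sum_of_squares[of 0 r U V u] assms(2) UV u by simp
  also have "\<dots> = card {(a, b) \<in> T \<times> T. a\<^sup>2 + a * b + b\<^sup>2 =\<^sub>F V + u\<^sup>2}"
    by (rule card_shift_norm_form[OF u(1)])
  also have "\<dots> = (if V + u\<^sup>2 =\<^sub>F 0 then 1 else 2 ^ m + 1)"
    by (rule card_norm_form_eq_F[OF assms(1)])
  also have "V + u\<^sup>2 =\<^sub>F 0 \<longleftrightarrow> V =\<^sub>F U"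
  proof -
    have "V + u\<^sup>2 =\<^sub>F 0 \<longleftrightarrow> V + U =\<^sub>F 0"
      by (rule eq_F_iff_left[OF eq_F_add[OF eq_F_refl eq_F_if_eq_R[OF u(2)]]])
    also have "\<dots> \<longleftrightarrow> V =\<^sub>F U"
      by (rule eq_F_iff_of_diff[where w = U]) (simp add: algebra_simps)
    finally show ?thesis .
  qed
  finally show ?thesis
    using teich_eq_F_imp_eq[OF UV(2,1)] mem_uminus_teich_iff[OF assms(2) UV] by auto
qed

lemma card_teich_sum_diff:
  assumes "degree r < m"
  shows "card {(X, Y, Z) \<in> T \<times> T \<times> T. X + Y - Z = r} = (if r \<in> T then 2 ^ (m + 1) - 1 else 2 ^ m - 1)"
proof -
  obtain U V where UV: "U \<in> T" "V \<in> T" "r =\<^sub>R U + 2 * V"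
    using teich_two_adic_expansion by blast
  obtain u where u: "u \<in> T" "u\<^sup>2 =\<^sub>R U"
    using teich_sqrt_exists[OF UV(1)] by blast
  have "card {(X, Y, Z) \<in> T \<times> T \<times> T. X + Y - Z = r}
      = card {(x, y, z) \<in> T \<times> T \<times> T. x + y + z =\<^sub>F u \<and> x * y + y * z + z * x + z\<^sup>2 =\<^sub>F V}"
    using card_sum_of_squares[of 1 r U V u] assms UV u by simp
  also have "\<dots> = card {(a, b) \<in> T \<times> T. a * b =\<^sub>F V}"
    by (rule card_shift_product[OF u(1)])
  also have "\<dots> = (if V = 0 then 2 * 2 ^ m - 1 else 2 ^ m - 1)"
    using card_teich_mult_eq_F_0 card_teich_mult_eq_F_nonzero teich_eq_F_0_iff[OF UV(2)] by simp
  finally show ?thesis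
    using mem_teich_iff_two_adic[OF assms UV] by simp
qed

lemma count_teich_triples:
  "count (image_mset (\<lambda>(X, Y, Z). g X Y Z) (mset_set (T \<times> T \<times> T))) r
    = card {(X, Y, Z) \<in> T \<times> T \<times> T. g X Y Z = r}"
proof -
  have "count (image_mset (\<lambda>(X, Y, Z). g X Y Z) (mset_set (T \<times> T \<times> T))) r
      = card {p \<in> T \<times> T \<times> T. (\<lambda>(X, Y, Z). g X Y Z) p = r}"
    using finite_teich by (intro count_image_mset_mset_set) simp
  also have "{p \<in> T \<times> T \<times> T. (\<lambda>(X, Y, Z). g X Y Z) p = r} = {(X, Y, Z) \<in> T \<times> T \<times> T. g X Y Z = r}"
    by auto
  finally show ?thesis .
qed

end

theorem lemmaB3:
  fixes f \<beta> :: "4 poly" and m :: nat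
  assumes "odd m"
    and "GR_modulus f m"
    and "\<beta> \<in> GR_carrier f"
    and "GR_mult_order f \<beta> (2 ^ m - 1)"
  shows "(\<forall>r \<in> GR_carrier f.
           count (image_mset (\<lambda>(X, Y, Z). X + Y + Z)
                    (mset_set (teich f \<beta> \<times> teich f \<beta> \<times> teich f \<beta>))) r
             = (if r \<in> uminus ` teich f \<beta> then 1 else 2 ^ m + 1)) \<and>
         (\<forall>r \<in> GR_carrier f.
           count (image_mset (\<lambda>(X, Y, Z). X + Y - Z)
                    (mset_set (teich f \<beta> \<times> teich f \<beta> \<times> teich f \<beta>))) r
             = (if r \<in> teich f \<beta> then 2 ^ (m + 1) - 1 else 2 ^ m - 1))"
proof -
  interpret teichmueller f \<beta> m
    using assms(2,4) by unfold_locales (auto simp: GR_modulus_def)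
  show ?thesis
    using card_teich_sum_three[OF assms(1)] card_teich_sum_diff
    by (simp add: count_teich_triples GR_carrier_def degree_f)
qed

end
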